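(* Let $m,n$ be positive integers and let $\mathbf{a},\mathbf{b}\in\mathcal{T}^{n+1}$, $\mathbf{c},\mathbf{d}\in\mathcal{T}^{n}$, $\mathbf{f},\mathbf{g}\in\mathcal{T}^{m+1}$, $\mathbf{h},\mathbf{e}\in\mathcal{T}^{m}$. Set $\mathbf{a}'=\mathbf{a}/0$, $\mathbf{b}'=\mathbf{b}/0$, $\mathbf{c}'=0/\mathbf{c}$, $\mathbf{d}'=0/\mathbf{d}$, $\mathbf{f}'=\mathbf{f}/0$, $\mathbf{g}'=\mathbf{g}/0$, $\mathbf{h}'=0/\mathbf{h}$, $\mathbf{e}'=0/\mathbf{e}$, and define the $(2m+1)\times(2n+1)$ matrices \begin{align*} Q&=\mathbf{f}'^{*t}\mathbf{a}'+\mathbf{g}'^t\mathbf{c}'-\mathbf{e}'^t\mathbf{b}'^*+\mathbf{h}'^t\mathbf{d}',\\ R&=\mathbf{f}'^{*t}\mathbf{b}'+\mathbf{g}'^{*t}\mathbf{d}'+\mathbf{e}'^t\mathbf{a}'^*-\mathbf{h}'^{*t}\mathbf{c}',\\ S&=\mathbf{g}'^{*t}\mathbf{a}'-\mathbf{f}'^t\mathbf{c}'-\mathbf{h}'^t\mathbf{b}'-\mathbf{e}'^t\mathbf{d}'^*,\\ T&=\mathbf{g}'^{t}\mathbf{b}'-\mathbf{f}'^t\mathbf{d}'+\mathbf{h}'^{*t}\mathbf{a}'+\mathbf{e}'^t\mathbf{c}'^*. \end{align*} Then every entry of $Q,R,S,T$ lies in $\mathcal{T}$ (i.e. $Q,R,S,T\in\mathcal{T}^{(2m+1)\times(2n+1)}$),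 and \[ (\psi_Q\psi_Q^*+\psi_R\psi_R^*+\psi_S\psi_S^*+\psi_T\psi_T^* )(x,y)=(\psi_{\mathbf{a}}\psi^*_{\mathbf{a}}+\psi_{\mathbf{b}}\psi^*_{\mathbf{b}}+\psi_{\mathbf{c}}\psi^*_{\mathbf{c}}+\psi_{\mathbf{d}}\psi^*_{\mathbf{d}})(x^2)\,(\psi_{\mathbf{e}}\psi^*_{\mathbf{e}}+\psi_{\mathbf{f}}\psi^*_{\mathbf{f}}+\psi_{\mathbf{g}}\psi^*_{\mathbf{g}}+\psi_{\mathbf{h}}\psi^*_{\mathbf{h}})(y^2). \]
   Context: $\mathcal{R}$ is a commutative ring with identity equipped with an involutive ring automorphism $*$, extended to $\mathcal{R}[x^{\pm1}]$ and $\mathcal{R}[x^{\pm1},y^{\pm1}]$ by acting on coefficients and sending $x\mapsto x^{-1}$, $y\mapsto y^{-1}$. $\mathcal{T}$ is a multiplicatively closed subset of $\mathcal{R}\setminus\{0\}$ with $-1\in\mathcal{T}$ and $\mathcal{T}^*=\mathcal{T}$. For $\mathbf{a}=(a_0,\dots,a_{l-1})\in\mathcal{R}^l$: $\mathbf{a}^*=(a_{l-1}^*,\dots,a_0^* )$, $\phi_{\mathbf{a}}(x)=\sum_{i=0}^{l-1}a_ix^i$, $\psi_{\mathbf{a}}(x)=x^{1-l}\phi_{\mathbf{a}}(x^2)$, $\mathbf{a}/0=(a_0,0,a_1,0,\dots,0,a_{l-1})\in\mathcal{R}^{2l-1}$ and $0/\mathbf{a}=(0,a_0,0,a_1,\dots,0,a_{l-1},0)\in\mathcal{R}^{2l+1}$.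 Vectors are $1\times k$ matrices, $t$ is transpose, so $\mathbf{u}^t\mathbf{v}$ is an outer product matrix. For $A\in\mathcal{R}^{p\times q}$ with rows $\mathbf{a}_0,\dots,\mathbf{a}_{p-1}$, $\psi_A(x,y)=\sum_{i=0}^{p-1}\psi_{\mathbf{a}_i}(x)\,y^{2i+1-p}$. *)

theory Defs
  imports "HOL-Library.Poly_Mapping" "HOL-Library.Product_Plus"
begin

(* Laurent polynomials over a commutative ring 'a:
  one variable: int =>0 'a (coefficient of x^k at key k),
  two variables: (int x int) =>0 'a (coefficient of x^i y^j at key (i,j)).
  Vectors are lists, matrices are lists of rows. *)

definition vstar :: "('a \<Rightarrow> 'a) \<Rightarrow> 'a list \<Rightarrow> 'a list" where
  "vstar cj a = rev (map cj a)"

definition vslash0 :: "'a::zero list \<Rightarrow> 'a list" where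
  "vslash0 a = map (\<lambda>j. if even j then a ! (j div 2) else 0) [0..<2 * length a - 1]"

definition v0slash :: "'a::zero list \<Rightarrow> 'a list" where
  "v0slash a = map (\<lambda>j. if odd j then a ! (j div 2) else 0) [0..<2 * length a + 1]"

definition outer :: "'a::times list \<Rightarrow> 'a list \<Rightarrow> 'a list list" where
  "outer u v = map (\<lambda>x. map (\<lambda>y. x * y) v) u"

definition madd :: "'a::plus list list \<Rightarrow> 'a list list \<Rightarrow> 'a list list" where
  "madd A B = map2 (map2 (+)) A B"

definition msub :: "'a::minus list list \<Rightarrow> 'a list list \<Rightarrow> 'a list list" where
  "msub A B = map2 (map2 (-)) A B"

(* psi_a(x) = x^(1-l) phi_a(x^2) = sum_i a_i x^(2i+1-l) *)
definition psi :: "'a::comm_ring_1 list \<Rightarrow> int \<Rightarrow>\<^sub>0 'a" where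
  "psi a = (\<Sum>i<length a. Poly_Mapping.single (2 * int i + 1 - int (length a)) (a ! i))"

definition psiM :: "'a::comm_ring_1 list list \<Rightarrow> (int \<times> int) \<Rightarrow>\<^sub>0 'a" where
  "psiM A = (\<Sum>i<length A. \<Sum>j<length (A ! i).
     Poly_Mapping.single (2 * int j + 1 - int (length (A ! i)), 2 * int i + 1 - int (length A)) (A ! i ! j))"

definition lpstar1 :: "('a::comm_ring_1 \<Rightarrow> 'a) \<Rightarrow> (int \<Rightarrow>\<^sub>0 'a) \<Rightarrow> int \<Rightarrow>\<^sub>0 'a" where
  "lpstar1 cj p = (\<Sum>k\<in>Poly_Mapping.keys p. Poly_Mapping.single (- k) (cj (Poly_Mapping.lookup p k)))"

definition lpstar2 :: "('a::comm_ring_1 \<Rightarrow> 'a) \<Rightarrow> ((int \<times> int) \<Rightarrow>\<^sub>0 'a) \<Rightarrow> (int \<times> int) \<Rightarrow>\<^sub>0 'a" where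
  "lpstar2 cj p = (\<Sum>k\<in>Poly_Mapping.keys p.
     Poly_Mapping.single (- fst k, - snd k) (cj (Poly_Mapping.lookup p k)))"

definition subst_x_sq :: "(int \<Rightarrow>\<^sub>0 'a::comm_ring_1) \<Rightarrow> (int \<times> int) \<Rightarrow>\<^sub>0 'a" where
  "subst_x_sq p = (\<Sum>k\<in>Poly_Mapping.keys p. Poly_Mapping.single (2 * k, 0) (Poly_Mapping.lookup p k))"

definition subst_y_sq :: "(int \<Rightarrow>\<^sub>0 'a::comm_ring_1) \<Rightarrow> (int \<times> int) \<Rightarrow>\<^sub>0 'a" where
  "subst_y_sq p = (\<Sum>k\<in>Poly_Mapping.keys p. Poly_Mapping.single (0, 2 * k) (Poly_Mapping.lookup p k))"

end

theory Submission
  imports Defs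
begin

text \<open>Stretching a vector to \<open>a/0\<close> or \<open>0/a\<close> turns \<open>\<psi>\<^sub>a(x)\<close> into \<open>\<psi>\<^sub>a(x\<^sup>2)\<close>,
  reversing and conjugating a vector applies \<open>*\<close> to \<open>\<psi>\<close>, and \<open>\<psi>\<close> of an outer product
  \<open>u\<^sup>t v\<close> is \<open>\<psi>\<^sub>u(y) \<psi>\<^sub>v(x)\<close>. Hence \<open>\<psi>\<^sub>Q, \<psi>\<^sub>R, \<psi>\<^sub>S, \<psi>\<^sub>T\<close> are bilinear expressions in
  \<open>\<psi>\<^sub>a(x\<^sup>2), \<dots>, \<psi>\<^sub>h(y\<^sup>2)\<close> and their conjugates, namely the components of a quaternion
  product, and the identity is the multiplicativity of the quaternion norm (Euler's
  four-square identity with conjugation), valid in any commutative ring with involution.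
  For the entries: \<open>a/0\<close> lives on even and \<open>0/c\<close> on odd indices, reversal of an
  odd-length vector preserves parity, and in each entry of \<open>Q, R, S, T\<close> exactly one of the
  four outer products is nonzero, so the entry is \<open>\<plusminus>\<close> a product of elements of \<open>\<T>\<close>.\<close>

definition pm_remap :: "('k \<Rightarrow> 'l) \<Rightarrow> ('a::zero \<Rightarrow> 'b::comm_monoid_add) \<Rightarrow> ('k \<Rightarrow>\<^sub>0 'a) \<Rightarrow> 'l \<Rightarrow>\<^sub>0 'b"
  where "pm_remap \<phi> c p = (\<Sum>k\<in>Poly_Mapping.keys p. Poly_Mapping.single (\<phi> k) (c (Poly_Mapping.lookup p k)))"

lemma pm_remap_eq_sum_superset:
  assumes "finite K" "Poly_Mapping.keys p \<subseteq> K" "c 0 = 0"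
  shows "pm_remap \<phi> c p = (\<Sum>k\<in>K. Poly_Mapping.single (\<phi> k) (c (Poly_Mapping.lookup p k)))"
  unfolding pm_remap_def
  by (rule sum.mono_neutral_left) (use assms in \<open>auto simp: in_keys_iff\<close>)

lemma pm_remap_zero [simp]: "pm_remap \<phi> c 0 = 0"
  by (simp add: pm_remap_def)

lemma pm_remap_single:
  "c 0 = 0 \<Longrightarrow> pm_remap \<phi> c (Poly_Mapping.single k v) = Poly_Mapping.single (\<phi> k) (c v)"
  by (subst pm_remap_eq_sum_superset[where K = "{k}"]) auto

lemma pm_remap_add:
  assumes "\<And>x y. c (x + y) = c x + c y" and c0: "c 0 = 0"
  shows "pm_remap \<phi> c (p + q) = pm_remap \<phi> c p + pm_remap \<phi> c q"
proof -
  let ?K = "Poly_Mapping.keys p \<union> Poly_Mapping.keys q"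
  have "pm_remap \<phi> c (p + q) = (\<Sum>k\<in>?K. Poly_Mapping.single (\<phi> k) (c (Poly_Mapping.lookup (p + q) k)))"
    by (rule pm_remap_eq_sum_superset) (use c0 keys_add[of p q] in auto)
  also have "\<dots> = pm_remap \<phi> c p + pm_remap \<phi> c q"
    by (simp add: lookup_add assms single_add sum.distrib pm_remap_eq_sum_superset[where K = ?K] c0)
  finally show ?thesis .
qed

lemma pm_remap_sum:
  assumes "\<And>x y. c (x + y) = c x + c y" "c 0 = 0"
  shows "pm_remap \<phi> c (\<Sum>i\<in>I. p i) = (\<Sum>i\<in>I. pm_remap \<phi> c (p i))"
  by (induction I rule: infinite_finite_induct) (auto simp: pm_remap_add assms)

lemma poly_mapping_eq_sum_single:
  "p = (\<Sum>k\<in>Poly_Mapping.keys p. Poly_Mapping.single k (Poly_Mapping.lookup p k))"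
  by (rule poly_mapping_eqI)
     (auto simp: lookup_sum lookup_single in_keys_iff when_def sum.delta' split: if_splits)

lemma pm_remap_id [simp]: "pm_remap (\<lambda>k. k) (\<lambda>x. x) p = p"
  unfolding pm_remap_def by (rule poly_mapping_eq_sum_single[symmetric])

lemma pm_remap_pm_remap:
  assumes "c\<^sub>1 0 = 0" "\<And>x y. c\<^sub>2 (x + y) = c\<^sub>2 x + c\<^sub>2 y" "c\<^sub>2 0 = 0"
  shows "pm_remap \<phi>\<^sub>2 c\<^sub>2 (pm_remap \<phi>\<^sub>1 c\<^sub>1 p) = pm_remap (\<lambda>k. \<phi>\<^sub>2 (\<phi>\<^sub>1 k)) (\<lambda>x. c\<^sub>2 (c\<^sub>1 x)) p"
  unfolding pm_remap_def[of \<phi>\<^sub>1] by (simp add: pm_remap_sum pm_remap_single assms) (simp add: pm_remap_def)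

lemma pm_remap_mult:
  fixes c :: "'a::semiring_0 \<Rightarrow> 'b::semiring_0" and \<phi> :: "'k::monoid_add \<Rightarrow> 'l::monoid_add"
  assumes c_add: "\<And>x y. c (x + y) = c x + c y" and c0: "c 0 = 0" and c_mult: "\<And>x y. c (x * y) = c x * c y"
    and \<phi>_add: "\<And>k l. \<phi> (k + l) = \<phi> k + \<phi> l"
  shows "pm_remap \<phi> c (p * q) = pm_remap \<phi> c p * pm_remap \<phi> c q"
proof -
  have pq: "p * q = (\<Sum>k\<in>Poly_Mapping.keys p. \<Sum>l\<in>Poly_Mapping.keys q.
      Poly_Mapping.single (k + l) (Poly_Mapping.lookup p k * Poly_Mapping.lookup q l))"
    by (subst (1) poly_mapping_eq_sum_single[of p], subst (1) poly_mapping_eq_sum_single[of q])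
       (simp add: sum_distrib_left sum_distrib_right mult_single, rule sum.swap)
  show ?thesis
    unfolding pq
    by (simp add: pm_remap_sum pm_remap_single c_add c0 c_mult \<phi>_add)
       (simp add: pm_remap_def sum_distrib_left sum_distrib_right mult_single, rule sum.swap)
qed

lemma lpstar1_eq_pm_remap: "lpstar1 cj = pm_remap uminus cj"
  by (rule ext) (simp add: lpstar1_def pm_remap_def)

lemma lpstar2_eq_pm_remap: "lpstar2 cj = pm_remap uminus cj"
  by (rule ext) (simp add: lpstar2_def pm_remap_def uminus_prod_def)

lemma subst_x_sq_eq_pm_remap: "subst_x_sq = pm_remap (\<lambda>k. (2 * k, 0)) (\<lambda>x. x)"
  by (rule ext) (simp add: subst_x_sq_def pm_remap_def)

lemma subst_y_sq_eq_pm_remap: "subst_y_sq = pm_remap (\<lambda>k. (0, 2 * k)) (\<lambda>x. x)"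
  by (rule ext) (simp add: subst_y_sq_def pm_remap_def)

definition lift_x :: "(int \<Rightarrow>\<^sub>0 'a::comm_monoid_add) \<Rightarrow> (int \<times> int) \<Rightarrow>\<^sub>0 'a"
  where "lift_x = pm_remap (\<lambda>k. (k, 0)) (\<lambda>x. x)"

definition lift_y :: "(int \<Rightarrow>\<^sub>0 'a::comm_monoid_add) \<Rightarrow> (int \<times> int) \<Rightarrow>\<^sub>0 'a"
  where "lift_y = pm_remap (\<lambda>k. (0, k)) (\<lambda>x. x)"

lemma sum_lessThan_double: "(\<Sum>j<2 * l. g j) = (\<Sum>k<l. g (2 * k) + g (2 * k + 1))"
  for g :: "nat \<Rightarrow> 'b::comm_monoid_add"
  by (induction l) (auto simp: add.assoc)

lemma length_vslash0 [simp]: "length (vslash0 a) = 2 * length a - 1"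
  by (simp add: vslash0_def)

lemma length_v0slash [simp]: "length (v0slash a) = 2 * length a + 1"
  by (simp add: v0slash_def)

lemma length_vstar [simp]: "length (vstar cj a) = length a"
  by (simp add: vstar_def)

lemma nth_vslash0: "j < 2 * length a - 1 \<Longrightarrow> vslash0 a ! j = (if even j then a ! (j div 2) else 0)"
  by (simp add: vslash0_def)

lemma nth_v0slash: "j < 2 * length a + 1 \<Longrightarrow> v0slash a ! j = (if odd j then a ! (j div 2) else 0)"
  by (simp add: v0slash_def nth_append; presburger)

lemma nth_vstar: "j < length v \<Longrightarrow> vstar cj v ! j = cj (v ! (length v - 1 - j))"
  by (simp add: vstar_def rev_nth)

lemma psi_of_square_eq_sum:
  "pm_remap ((*) 2) (\<lambda>x. x) (psi a) =
     (\<Sum>k<length a. Poly_Mapping.single (2 * (2 * int k + 1 - int (length a))) (a ! k))"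
  unfolding psi_def by (simp add: pm_remap_sum pm_remap_single)

lemma psi_vslash0:
  assumes "a \<noteq> []"
  shows "psi (vslash0 a) = pm_remap ((*) 2) (\<lambda>x. x) (psi a)"
proof -
  let ?l = "length a"
  define g where "g j = Poly_Mapping.single (2 * int j + 1 - int (2 * ?l - 1))
      (if even j then a ! (j div 2) else 0)" for j
  have "psi (vslash0 a) = (\<Sum>j<2 * ?l - 1. g j)"
    unfolding psi_def by (rule sum.cong) (auto simp: nth_vslash0 g_def)
  also have "\<dots> = (\<Sum>j<2 * ?l. g j)"
  proof -
    have "2 * ?l = Suc (2 * ?l - 1)" and "odd (2 * ?l - 1)"
      using assms by (auto simp: neq_Nil_conv)
    then have "g (2 * ?l - 1) = 0"
      by (simp add: g_def)
    then show ?thesis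
      using \<open>2 * ?l = Suc (2 * ?l - 1)\<close> by (metis sum.lessThan_Suc add_0_right)
  qed
  also have "\<dots> = pm_remap ((*) 2) (\<lambda>x. x) (psi a)"
    unfolding sum_lessThan_double psi_of_square_eq_sum using assms
    by (intro sum.cong) (auto simp: g_def algebra_simps of_nat_diff)
  finally show ?thesis .
qed

lemma psi_v0slash: "psi (v0slash a) = pm_remap ((*) 2) (\<lambda>x. x) (psi a)"
proof -
  let ?l = "length a"
  define g where "g j = Poly_Mapping.single (2 * int j + 1 - int (2 * ?l + 1))
      (if odd j then a ! (j div 2) else 0)" for j
  have "psi (v0slash a) = (\<Sum>j<2 * ?l + 1. g j)"
    unfolding psi_def by (rule sum.cong) (auto simp: nth_v0slash g_def)
  also have "\<dots> = (\<Sum>j<2 * ?l. g j)"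
    by (simp add: g_def)
  also have "\<dots> = pm_remap ((*) 2) (\<lambda>x. x) (psi a)"
    unfolding sum_lessThan_double psi_of_square_eq_sum
    by (intro sum.cong) (auto simp: g_def algebra_simps)
  finally show ?thesis .
qed

lemma psi_vstar:
  assumes "\<And>x y. cj (x + y) = cj x + cj y" "cj 0 = 0"
  shows "psi (vstar cj v) = lpstar1 cj (psi v)"
proof -
  let ?l = "length v"
  have "psi (vstar cj v) =
      (\<Sum>i<?l. Poly_Mapping.single (2 * int (?l - Suc (?l - Suc i)) + 1 - int ?l) (cj (v ! (?l - Suc i))))"
    unfolding psi_def by (intro sum.cong) (auto simp: nth_vstar of_nat_diff)
  also have "\<dots> = (\<Sum>i<?l. Poly_Mapping.single (2 * int (?l - Suc i) + 1 - int ?l) (cj (v ! i)))"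
    by (rule sum.nat_diff_reindex[where g = "\<lambda>j. Poly_Mapping.single (2 * int (?l - Suc j) + 1 - int ?l) (cj (v ! j))"])
  also have "\<dots> = lpstar1 cj (psi v)"
    unfolding psi_def lpstar1_eq_pm_remap
    by (simp add: pm_remap_sum pm_remap_single assms) (intro sum.cong; simp add: of_nat_diff algebra_simps)
  finally show ?thesis .
qed

definition has_shape :: "'a list list \<Rightarrow> nat \<Rightarrow> nat \<Rightarrow> bool"
  where "has_shape A p q \<longleftrightarrow> length A = p \<and> (\<forall>i<p. length (A ! i) = q)"

lemma has_shape_outer: "length u = p \<Longrightarrow> length v = q \<Longrightarrow> has_shape (outer u v) p q"
  by (simp add: has_shape_def outer_def)

lemma has_shape_madd: "has_shape A p q \<Longrightarrow> has_shape B p q \<Longrightarrow> has_shape (madd A B) p q"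
  by (simp add: has_shape_def madd_def)

lemma has_shape_msub: "has_shape A p q \<Longrightarrow> has_shape B p q \<Longrightarrow> has_shape (msub A B) p q"
  by (simp add: has_shape_def msub_def)

lemma nth_madd:
  "has_shape A p q \<Longrightarrow> has_shape B p q \<Longrightarrow> i < p \<Longrightarrow> j < q \<Longrightarrow> madd A B ! i ! j = A ! i ! j + B ! i ! j"
  by (simp add: has_shape_def madd_def)

lemma nth_msub:
  "has_shape A p q \<Longrightarrow> has_shape B p q \<Longrightarrow> i < p \<Longrightarrow> j < q \<Longrightarrow> msub A B ! i ! j = A ! i ! j - B ! i ! j"
  by (simp add: has_shape_def msub_def)

lemma nth_outer: "i < length u \<Longrightarrow> j < length v \<Longrightarrow> outer u v ! i ! j = u ! i * v ! j"
  by (simp add: outer_def)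

lemma entries_in_if_has_shape:
  "has_shape M p q \<Longrightarrow> (\<And>i j. i < p \<Longrightarrow> j < q \<Longrightarrow> M ! i ! j \<in> T) \<Longrightarrow> \<forall>row\<in>set M. set row \<subseteq> T"
  unfolding has_shape_def by (auto simp: in_set_conv_nth)

lemma psiM_has_shape: "has_shape A p q \<Longrightarrow> psiM A = (\<Sum>i<p. \<Sum>j<q.
     Poly_Mapping.single (2 * int j + 1 - int q, 2 * int i + 1 - int p) (A ! i ! j))"
  unfolding psiM_def has_shape_def by (intro sum.cong) auto

lemma psiM_madd: "has_shape A p q \<Longrightarrow> has_shape B p q \<Longrightarrow> psiM (madd A B) = psiM A + psiM B"
  by (simp add: psiM_has_shape[of _ p q] has_shape_madd nth_madd single_add sum.distrib)

lemma psiM_msub: "has_shape A p q \<Longrightarrow> has_shape B p q \<Longrightarrow> psiM (msub A B) = psiM A - psiM B"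
  by (simp add: psiM_has_shape[of _ p q] has_shape_msub nth_msub single_diff sum_subtractf)

lemma psiM_outer: "psiM (outer u v) = lift_y (psi u) * lift_x (psi v)"
proof -
  have "psiM (outer u v) = (\<Sum>i<length u. \<Sum>j<length v.
     Poly_Mapping.single (2 * int j + 1 - int (length v), 2 * int i + 1 - int (length u)) (u ! i * v ! j))"
    by (simp add: psiM_has_shape[OF has_shape_outer] nth_outer)
  also have "\<dots> = lift_y (psi u) * lift_x (psi v)"
    unfolding lift_y_def lift_x_def psi_def
    by (simp add: pm_remap_sum pm_remap_single sum_distrib_left sum_distrib_right mult_single)
       (rule sum.swap)
  finally show ?thesis .
qed

definition Q_mat :: "('a::comm_ring_1 \<Rightarrow> 'a) \<Rightarrow> 'a list \<Rightarrow> 'a list \<Rightarrow> 'a list \<Rightarrow> 'a list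
    \<Rightarrow> 'a list \<Rightarrow> 'a list \<Rightarrow> 'a list \<Rightarrow> 'a list \<Rightarrow> 'a list list"
  where "Q_mat cj a b c d e f g h =
    madd (msub (madd (outer (vstar cj f) a) (outer g c)) (outer e (vstar cj b))) (outer h d)"

definition R_mat :: "('a::comm_ring_1 \<Rightarrow> 'a) \<Rightarrow> 'a list \<Rightarrow> 'a list \<Rightarrow> 'a list \<Rightarrow> 'a list
    \<Rightarrow> 'a list \<Rightarrow> 'a list \<Rightarrow> 'a list \<Rightarrow> 'a list \<Rightarrow> 'a list list"
  where "R_mat cj a b c d e f g h =
    msub (madd (madd (outer (vstar cj f) b) (outer (vstar cj g) d)) (outer e (vstar cj a)))
      (outer (vstar cj h) c)"

definition S_mat :: "('a::comm_ring_1 \<Rightarrow> 'a) \<Rightarrow> 'a list \<Rightarrow> 'a list \<Rightarrow> 'a list \<Rightarrow> 'a list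
    \<Rightarrow> 'a list \<Rightarrow> 'a list \<Rightarrow> 'a list \<Rightarrow> 'a list \<Rightarrow> 'a list list"
  where "S_mat cj a b c d e f g h =
    msub (msub (msub (outer (vstar cj g) a) (outer f c)) (outer h b)) (outer e (vstar cj d))"

definition T_mat :: "('a::comm_ring_1 \<Rightarrow> 'a) \<Rightarrow> 'a list \<Rightarrow> 'a list \<Rightarrow> 'a list \<Rightarrow> 'a list
    \<Rightarrow> 'a list \<Rightarrow> 'a list \<Rightarrow> 'a list \<Rightarrow> 'a list \<Rightarrow> 'a list list"
  where "T_mat cj a b c d e f g h =
    madd (madd (msub (outer g b) (outer f d)) (outer (vstar cj h) a)) (outer e (vstar cj c))"

text \<open>Primed letters play the role of the conjugates.\<close>

lemma conj_four_square_identity: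
  fixes A B C D E F G H A' B' C' D' E' F' G' H' :: "'a::comm_ring_1"
  shows "(F'*A + G*C - E*B' + H*D) * (F*A' + G'*C' - E'*B + H'*D')
       + (F'*B + G'*D + E*A' - H'*C) * (F*B' + G*D' + E'*A - H*C')
       + (G'*A - F*C - H*B - E*D') * (G*A' - F'*C' - H'*B' - E'*D)
       + (G*B - F*D + H'*A + E*C') * (G'*B' - F'*D' + H*A' + E'*C)
       = (A*A' + B*B' + C*C' + D*D') * (E*E' + F*F' + G*G' + H*H')"
  by (simp add: algebra_simps)

context
  fixes cj :: "'a::comm_ring_1 \<Rightarrow> 'a"
  assumes cj_add: "\<And>x y. cj (x + y) = cj x + cj y"
    and cj_mult: "\<And>x y. cj (x * y) = cj x * cj y"
    and cj_cj: "\<And>x. cj (cj x) = x"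
begin

lemma cj_zero: "cj 0 = 0"
  using cj_add[of 0 0] by simp

lemma lpstar2_add: "lpstar2 cj (p + q) = lpstar2 cj p + lpstar2 cj q"
  by (simp add: lpstar2_eq_pm_remap pm_remap_add cj_add cj_zero)

lemma lpstar2_diff: "lpstar2 cj (p - q) = lpstar2 cj p - lpstar2 cj q"
  using lpstar2_add[of "p - q" q] by (simp add: eq_diff_eq)

lemma lpstar2_mult: "lpstar2 cj (p * q) = lpstar2 cj p * lpstar2 cj q"
  by (simp add: lpstar2_eq_pm_remap pm_remap_mult cj_add cj_zero cj_mult)

lemma lpstar2_lpstar2: "lpstar2 cj (lpstar2 cj p) = p"
  by (simp add: lpstar2_eq_pm_remap pm_remap_pm_remap cj_add cj_zero cj_cj)

lemma lift_x_lpstar1: "lift_x (lpstar1 cj p) = lpstar2 cj (lift_x p)"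
  by (simp add: lift_x_def lpstar1_eq_pm_remap lpstar2_eq_pm_remap pm_remap_pm_remap cj_add cj_zero)

lemma lift_y_lpstar1: "lift_y (lpstar1 cj p) = lpstar2 cj (lift_y p)"
  by (simp add: lift_y_def lpstar1_eq_pm_remap lpstar2_eq_pm_remap pm_remap_pm_remap cj_add cj_zero)

lemma lift_x_psi_vstar: "lift_x (psi (vstar cj v)) = lpstar2 cj (lift_x (psi v))"
  by (simp add: psi_vstar cj_add cj_zero lift_x_lpstar1)

lemma lift_y_psi_vstar: "lift_y (psi (vstar cj v)) = lpstar2 cj (lift_y (psi v))"
  by (simp add: psi_vstar cj_add cj_zero lift_y_lpstar1)

lemma subst_x_sq_norm: "subst_x_sq (p * lpstar1 cj p) = subst_x_sq p * lpstar2 cj (subst_x_sq p)"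
  by (simp add: subst_x_sq_eq_pm_remap lpstar1_eq_pm_remap lpstar2_eq_pm_remap
      pm_remap_mult pm_remap_pm_remap cj_add cj_zero)

lemma subst_y_sq_norm: "subst_y_sq (p * lpstar1 cj p) = subst_y_sq p * lpstar2 cj (subst_y_sq p)"
  by (simp add: subst_y_sq_eq_pm_remap lpstar1_eq_pm_remap lpstar2_eq_pm_remap
      pm_remap_mult pm_remap_pm_remap cj_add cj_zero)

lemma psiM_Q_R_S_T_norm:
  assumes "length b = length a" "length c = length a" "length d = length a"
    and "length f = length e" "length g = length e" "length h = length e"
  shows "psiM (Q_mat cj a b c d e f g h) * lpstar2 cj (psiM (Q_mat cj a b c d e f g h))
       + psiM (R_mat cj a b c d e f g h) * lpstar2 cj (psiM (R_mat cj a b c d e f g h))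
       + psiM (S_mat cj a b c d e f g h) * lpstar2 cj (psiM (S_mat cj a b c d e f g h))
       + psiM (T_mat cj a b c d e f g h) * lpstar2 cj (psiM (T_mat cj a b c d e f g h))
     = (lift_x (psi a) * lpstar2 cj (lift_x (psi a)) + lift_x (psi b) * lpstar2 cj (lift_x (psi b))
        + lift_x (psi c) * lpstar2 cj (lift_x (psi c)) + lift_x (psi d) * lpstar2 cj (lift_x (psi d)))
     * (lift_y (psi e) * lpstar2 cj (lift_y (psi e)) + lift_y (psi f) * lpstar2 cj (lift_y (psi f))
        + lift_y (psi g) * lpstar2 cj (lift_y (psi g)) + lift_y (psi h) * lpstar2 cj (lift_y (psi h)))"
proof -
  note psiM_lin = psiM_madd[of _ "length e" "length a"] psiM_msub[of _ "length e" "length a"]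
    has_shape_madd has_shape_msub has_shape_outer
  have psiM_mats: "psiM (Q_mat cj a b c d e f g h) =
      psiM (outer (vstar cj f) a) + psiM (outer g c) - psiM (outer e (vstar cj b)) + psiM (outer h d)"
    "psiM (R_mat cj a b c d e f g h) = psiM (outer (vstar cj f) b) + psiM (outer (vstar cj g) d)
      + psiM (outer e (vstar cj a)) - psiM (outer (vstar cj h) c)"
    "psiM (S_mat cj a b c d e f g h) = psiM (outer (vstar cj g) a) - psiM (outer f c)
      - psiM (outer h b) - psiM (outer e (vstar cj d))"
    "psiM (T_mat cj a b c d e f g h) = psiM (outer g b) - psiM (outer f d)
      + psiM (outer (vstar cj h) a) + psiM (outer e (vstar cj c))"
    by (simp_all add: Q_mat_def R_mat_def S_mat_def T_mat_def psiM_lin assms)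
  show ?thesis
    unfolding psiM_mats psiM_outer lift_x_psi_vstar lift_y_psi_vstar
      lpstar2_add lpstar2_diff lpstar2_mult lpstar2_lpstar2
    by (rule conj_four_square_identity)
qed

end

lemma lift_x_psi_vslash0: "a \<noteq> [] \<Longrightarrow> lift_x (psi (vslash0 a)) = subst_x_sq (psi a)"
  by (simp add: psi_vslash0 lift_x_def subst_x_sq_eq_pm_remap pm_remap_pm_remap)

lemma lift_x_psi_v0slash: "lift_x (psi (v0slash a)) = subst_x_sq (psi a)"
  by (simp add: psi_v0slash lift_x_def subst_x_sq_eq_pm_remap pm_remap_pm_remap)

lemma lift_y_psi_vslash0: "a \<noteq> [] \<Longrightarrow> lift_y (psi (vslash0 a)) = subst_y_sq (psi a)"
  by (simp add: psi_vslash0 lift_y_def subst_y_sq_eq_pm_remap pm_remap_pm_remap)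

lemma lift_y_psi_v0slash: "lift_y (psi (v0slash a)) = subst_y_sq (psi a)"
  by (simp add: psi_v0slash lift_y_def subst_y_sq_eq_pm_remap pm_remap_pm_remap)

lemma subst_x_sq_add: "subst_x_sq (p + q) = subst_x_sq p + subst_x_sq q"
  by (simp add: subst_x_sq_eq_pm_remap pm_remap_add)

lemma subst_y_sq_add: "subst_y_sq (p + q) = subst_y_sq p + subst_y_sq q"
  by (simp add: subst_y_sq_eq_pm_remap pm_remap_add)

definition parity_supported :: "'a set \<Rightarrow> bool \<Rightarrow> 'a::zero list \<Rightarrow> bool"
  where "parity_supported T ev v \<longleftrightarrow> (\<forall>j<length v. if even j = ev then v ! j \<in> T else v ! j = 0)"

lemma parity_supported_vslash0: "set a \<subseteq> T \<Longrightarrow> parity_supported T True (vslash0 a)"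
  by (auto simp: parity_supported_def nth_vslash0)

lemma parity_supported_v0slash: "set a \<subseteq> T \<Longrightarrow> parity_supported T False (v0slash a)"
  unfolding parity_supported_def
proof (intro allI impI)
  fix j assume "set a \<subseteq> T" "j < length (v0slash a)"
  moreover have "odd j \<Longrightarrow> j < 2 * length a + 1 \<Longrightarrow> j div 2 < length a"
    by presburger
  ultimately show "if even j = False then v0slash a ! j \<in> T else v0slash a ! j = 0"
    by (auto simp: nth_v0slash)
qed

lemma parity_supported_vstar:
  assumes "parity_supported T ev v" "odd (length v)" "cj ` T \<subseteq> T" "cj 0 = 0"
  shows "parity_supported T ev (vstar cj v)"
  unfolding parity_supported_def
proof (intro allI impI)
  fix j assume j: "j < length (vstar cj v)"
  then have "length v - 1 - j < length v" and "even (length v - 1 - j) = even j"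
    using assms(2) by auto
  then show "if even j = ev then vstar cj v ! j \<in> T else vstar cj v ! j = 0"
    using assms j unfolding parity_supported_def by (auto simp: nth_vstar)
qed

lemma outer_nth_in:
  assumes "parity_supported T (even i) u" "parity_supported T (even j) v"
    and "\<And>x y. x \<in> T \<Longrightarrow> y \<in> T \<Longrightarrow> x * y \<in> T"
    and "i < length u" "j < length v"
  shows "outer u v ! i ! j \<in> T"
  using assms unfolding parity_supported_def by (auto simp: nth_outer)

lemma outer_nth_eq_0_left:
  fixes u v :: "'a::mult_zero list"
  shows "parity_supported T (odd i) u \<Longrightarrow> i < length u \<Longrightarrow> j < length v \<Longrightarrow> outer u v ! i ! j = 0"
  unfolding parity_supported_def by (auto simp: nth_outer)

lemma outer_nth_eq_0_right:
  fixes u v :: "'a::mult_zero list"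
  shows "parity_supported T (odd j) v \<Longrightarrow> i < length u \<Longrightarrow> j < length v \<Longrightarrow> outer u v ! i ! j = 0"
  unfolding parity_supported_def by (auto simp: nth_outer)

lemma Q_R_S_T_entries_in:
  fixes cj :: "'a::comm_ring_1 \<Rightarrow> 'a"
  assumes T_mult: "\<And>x y. x \<in> T \<Longrightarrow> y \<in> T \<Longrightarrow> x * y \<in> T" and T_minus_one: "- 1 \<in> T"
    and T_cj: "cj ` T \<subseteq> T" and cj_zero: "cj 0 = 0"
    and odd_lengths: "odd p" "odd q"
    and lengths: "length a = p" "length b = p" "length c = p" "length d = p"
      "length e = q" "length f = q" "length g = q" "length h = q"
    and supp: "parity_supported T True a" "parity_supported T True b"
      "parity_supported T False c" "parity_supported T False d"
      "parity_supported T False e" "parity_supported T True f"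
      "parity_supported T True g" "parity_supported T False h"
  shows "\<forall>M\<in>{Q_mat cj a b c d e f g h, R_mat cj a b c d e f g h, S_mat cj a b c d e f g h,
      T_mat cj a b c d e f g h}. \<forall>row\<in>set M. set row \<subseteq> T" (is "\<forall>M\<in>?Ms. _")
proof (rule ballI)
  have T_uminus: "- x \<in> T \<longleftrightarrow> x \<in> T" for x
    using T_mult[OF T_minus_one, of x] T_mult[OF T_minus_one, of "- x"] by auto
  have supp_vstar: "parity_supported T True (vstar cj a)" "parity_supported T True (vstar cj b)"
    "parity_supported T False (vstar cj c)" "parity_supported T False (vstar cj d)"
    "parity_supported T False (vstar cj e)" "parity_supported T True (vstar cj f)"
    "parity_supported T True (vstar cj g)" "parity_supported T False (vstar cj h)"
    using supp by (auto intro!: parity_supported_vstar[OF _ _ T_cj cj_zero] simp: lengths odd_lengths)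
  note matrices = Q_mat_def R_mat_def S_mat_def T_mat_def
  note shapes = has_shape_madd has_shape_msub has_shape_outer
  note entries = outer_nth_in[OF _ _ T_mult] outer_nth_eq_0_left[where T = T] outer_nth_eq_0_right[where T = T]
  fix M assume M: "M \<in> ?Ms"
  have "has_shape M q p"
    using M by (auto simp: matrices lengths intro!: shapes)
  moreover have "M ! i ! j \<in> T" if "i < q" "j < p" for i j
    using M that
    by (cases "even i"; cases "even j")
       (auto simp: matrices nth_madd[of _ q p] nth_msub[of _ q p] shapes lengths entries supp supp_vstar T_uminus)
  ultimately show "\<forall>row\<in>set M. set row \<subseteq> T"
    by (rule entries_in_if_has_shape)
qed

theorem lemma3p2:
  fixes cj :: "'a::comm_ring_1 \<Rightarrow> 'a" and TT :: "'a set"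
    and m n :: nat and a b c d f g h e :: "'a list"
  assumes cj_add: "\<forall>x y. cj (x + y) = cj x + cj y"
    and cj_mult: "\<forall>x y. cj (x * y) = cj x * cj y"
    and cj_one: "cj 1 = 1"
    and cj_invol: "\<forall>x. cj (cj x) = x"
    and TT_mult: "\<forall>x\<in>TT. \<forall>y\<in>TT. x * y \<in> TT"
    and TT_nz: "0 \<notin> TT"
    and TT_m1: "- 1 \<in> TT"
    and TT_star: "cj ` TT = TT"
    and mpos: "0 < m" and npos: "0 < n"
    and la: "length a = n + 1" and lb: "length b = n + 1"
    and lc: "length c = n" and ld: "length d = n"
    and lf: "length f = m + 1" and lg: "length g = m + 1"
    and lh: "length h = m" and le: "length e = m"
    and Ta: "set a \<subseteq> TT" and Tb: "set b \<subseteq> TT" and Tc: "set c \<subseteq> TT" and Td: "set d \<subseteq> TT"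
    and Tf: "set f \<subseteq> TT" and Tg: "set g \<subseteq> TT" and Th: "set h \<subseteq> TT" and Te: "set e \<subseteq> TT"
  shows
    "let a' = vslash0 a; b' = vslash0 b; c' = v0slash c; d' = v0slash d;
         f' = vslash0 f; g' = vslash0 g; h' = v0slash h; e' = v0slash e;
         Q = madd (msub (madd (outer (vstar cj f') a') (outer g' c')) (outer e' (vstar cj b')))
                  (outer h' d');
         R = msub (madd (madd (outer (vstar cj f') b') (outer (vstar cj g') d')) (outer e' (vstar cj a')))
                  (outer (vstar cj h') c');
         S = msub (msub (msub (outer (vstar cj g') a') (outer f' c')) (outer h' b'))
                  (outer e' (vstar cj d'));
         T = madd (madd (msub (outer g' b') (outer f' d')) (outer (vstar cj h') a'))
                  (outer e' (vstar cj c'))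
     in (\<forall>M\<in>{Q, R, S, T}. \<forall>row\<in>set M. set row \<subseteq> TT) \<and>
        psiM Q * lpstar2 cj (psiM Q) + psiM R * lpstar2 cj (psiM R)
          + psiM S * lpstar2 cj (psiM S) + psiM T * lpstar2 cj (psiM T)
        = subst_x_sq (psi a * lpstar1 cj (psi a) + psi b * lpstar1 cj (psi b)
                      + psi c * lpstar1 cj (psi c) + psi d * lpstar1 cj (psi d))
          * subst_y_sq (psi e * lpstar1 cj (psi e) + psi f * lpstar1 cj (psi f)
                      + psi g * lpstar1 cj (psi g) + psi h * lpstar1 cj (psi h))"
proof -
  have cj: "\<And>x y. cj (x + y) = cj x + cj y" "\<And>x y. cj (x * y) = cj x * cj y" "\<And>x. cj (cj x) = x"
    using cj_add cj_mult cj_invol by auto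
  have nonempty: "a \<noteq> []" "b \<noteq> []" "f \<noteq> []" "g \<noteq> []"
    using la lb lf lg by auto
  note entry_facts = TT_m1 TT_star cj_zero[OF cj] la lb lc ld le lf lg lh
    parity_supported_vslash0 parity_supported_v0slash Ta Tb Tc Td Te Tf Tg Th
  note norm_facts = psiM_Q_R_S_T_norm[OF cj] nonempty
    lift_x_psi_vslash0 lift_x_psi_v0slash lift_y_psi_vslash0 lift_y_psi_v0slash
    subst_x_sq_add subst_y_sq_add subst_x_sq_norm[OF cj] subst_y_sq_norm[OF cj]
  show ?thesis
    unfolding Let_def Q_mat_def[symmetric] R_mat_def[symmetric] S_mat_def[symmetric] T_mat_def[symmetric]
  proof (intro conjI Q_R_S_T_entries_in[where p = "2 * n + 1" and q = "2 * m + 1"])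
    show "x * y \<in> TT" if "x \<in> TT" "y \<in> TT" for x y
      using TT_mult that by blast
  qed (auto simp: entry_facts norm_facts)
qed

end
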